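(* For every $1\le i\le r-2$ and every $j\in I\setminus X$ one has $\widetilde\tau_r\widetilde\tau_i(B_j)=\widetilde\tau_i\widetilde\tau_r(B_j)$.
   Context: Let $\mathbb K$ be a field of characteristic zero, $q$ an indeterminate, $\mathbb K'$ a field extension of $\mathbb K(q^{1/2})$ containing square roots of all parameters $c_i$ below; all algebras are over $\mathbb K'$. $n\ge1$, $I=\{1,\dots,n\}$, $\mathfrak g=\mathfrak{sl}_{n+1}(\mathbb C)$, simple roots $\alpha_i$, fundamental weights $\varpi_i$, weight lattice $P$, Cartan matrix $a_{ii}=2$, $a_{ij}=-1$ if $|i-j|=1$, else $0$, form $(\alpha_i,\alpha_j)=a_{ij}$, $(\alpha_i,\varpi_j)=\delta_{ij}$; simple reflections $\sigma_i$. $U_q(\mathfrak g)$ is generated by $E_i,F_i,K_\mu$ ($\mu\in P$) with $K_0=1$, $K_\mu K_\lambda=K_{\mu+\lambda}$, $K_\mu E_i=q^{(\alpha_i,\mu)}E_iK_\mu$, $K_\mu F_i=q^{-(\alpha_i,\mu)}F_iK_\mu$, $E_iF_j-F_jE_i=\delta_{ij}\frac{K_i-K_i^{-1}}{q-q^{-1}}$ ($K_i=K_{\alpha_i}$), and the quantum Serre relations. $[a,b]_c=ab-cba$. Lusztig automorphisms: $T_i(E_i)=-F_iK_i$, $T_i(F_i)=-K_i^{-1}E_i$, $T_i(K_\mu)=K_{\sigma_i(\mu)}$, $T_i(E_j)=E_j,T_i(F_j)=F_j$ if $a_{ij}=0$, $T_i(E_j)=[E_i,E_j]_{q^{-1}}$,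 $T_i(F_j)=[F_j,F_i]_q$ if $a_{ij}=-1$. Fix $r$ with $1\le r\le\lceil n/2\rceil-1$, $X=\{r+1,\dots,n-r\}$, $\tau(i)=n-i+1$ (on weights $\varpi_i\mapsto\varpi_{\tau(i)}$). $E_X^+=[E_{r+1},[\dots,[E_{n-r-1},E_{n-r}]_{q^{-1}}\dots]_{q^{-1}}]_{q^{-1}}$, $E_X^-=[E_{n-r},[\dots,[E_{r+2},E_{r+1}]_{q^{-1}}\dots]_{q^{-1}}]_{q^{-1}}$, $F_X^+=[F_{r+1},[\dots,[F_{n-r-1},F_{n-r}]_q\dots]_q]_q$, $F_X^-=[F_{n-r},[\dots,[F_{r+2},F_{r+1}]_q\dots]_q]_q$; $K_X=K_{r+1}\cdots K_{n-r}$; $L_i=K_iK_{\tau(i)}^{-1}$; $\varpi'_i=\varpi_i-\varpi_{\tau(i)}$. $\mathcal M_X$ is generated by $E_j,F_j,K_j^{\pm1}$ ($j\in X$); $U^0_\Theta$ by the $K_\mu$ with $-w_X\tau(\mu)=\mu$ ($w_X$ longest element of the parabolic Weyl subgroup for $X$). Parameters $c_i\in\mathbb K(q^{1/2})^\times$ ($i\in I\setminus X$) with $c_i=c_{\tau(i)}$ for $i\notin X\cup\{r,\tau(r)\}$. $B_i=F_i-c_iE_{\tau(i)}K_i^{-1}$ for $i\in I\setminus(X\cup\{r,\tau(r)\})$, $B_r=F_r-c_r[E_X^+,E_{\tau(r)}]_{q^{-1}}K_r^{-1}$, $B_{\tau(r)}=F_{\tau(r)}-c_{\tau(r)}[E_X^-,E_r]_{q^{-1}}K_{\tau(r)}^{-1}$;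 $B_{\mathbf c}$ is generated by $\mathcal M_X$, $U^0_\Theta$ and the $B_i$. $C=(qc_rc_{\tau(r)})^{-1/2}$; items involving $r-1$ occur only when $r\ge2$. For $1\le i\le r-1$, $\widetilde\tau_i$ is the unique algebra automorphism of $B_{\mathbf c}$ equal to $T_iT_{\tau(i)}$ on $\mathcal M_XU^0_\Theta$ with $\widetilde\tau_i(B_j)=q^{-1}B_{\tau(j)}L_{\tau(j)}$ if $j\in\{i,\tau(i)\}$, $(qc_i)^{-1/2}[B_j,B_i]_q$ if $a_{ij}=-1$, $(qc_{\tau(i)})^{-1/2}[B_j,B_{\tau(i)}]_q$ if $a_{\tau(i)j}=-1$, $B_j$ if $a_{ij}=a_{\tau(i)j}=0$ ($j\in I\setminus X$). $\widetilde\tau_r$ is the unique algebra automorphism of $B_{\mathbf c}$ equal to $T_rT_{r+1}\cdots T_{n-r+1}\cdots T_{r+1}T_r$ on $\mathcal M_XU^0_\Theta$ with $\widetilde\tau_r(B_r)=q^{-1}B_rL_rK_{\varpi'_{r+1}}$, $\widetilde\tau_r(B_{\tau(r)})=q^{-1}B_{\tau(r)}L_{\tau(r)}K_{\varpi'_{\tau(r+1)}}$, $\widetilde\tau_r(B_{r-1})=C([B_{r-1},[B_r,[F_X^+,B_{\tau(r)}]_q]_q]_q+qc_{\tau(r)}B_{r-1}L_rK_X^{-1})$, $\widetilde\tau_r(B_{\tau(r-1)})=C([B_{\tau(r-1)},[B_{\tau(r)},[F_X^-,B_r]_q]_q]_q+qc_rB_{\tau(r-1)}L_{\tau(r)}K_X^{-1})$,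 $\widetilde\tau_r(B_j)=B_j$ otherwise. *)

theory Defs
  imports "HOL-Computational_Algebra.Polynomial"
begin

text \<open>Cartan matrix of type A (indices in I = {1..n}).\<close>
definition cartan :: "nat \<Rightarrow> nat \<Rightarrow> int" where
  "cartan i j = (if i = j then 2 else if i = j + 1 \<or> j = i + 1 then -1 else 0)"

text \<open>Weights are written in the basis of fundamental weights: a weight mu is the
  integer vector (mu k)_k with mu = sum_k mu k * varpi_k; hence (alpha_i, mu) = mu i.\<close>
type_synonym weight = "nat \<Rightarrow> int"

definition wt_lattice :: "nat \<Rightarrow> weight set" where
  "wt_lattice n = {\<mu>. \<forall>k. k \<notin> {1..n} \<longrightarrow> \<mu> k = 0}"

definition wzero :: weight where "wzero = (\<lambda>k. 0)"
definition wadd :: "weight \<Rightarrow> weight \<Rightarrow> weight" where "wadd \<mu> \<nu> = (\<lambda>k. \<mu> k + \<nu> k)"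
definition wneg :: "weight \<Rightarrow> weight" where "wneg \<mu> = (\<lambda>k. - \<mu> k)"
definition wsub :: "weight \<Rightarrow> weight \<Rightarrow> weight" where "wsub \<mu> \<nu> = (\<lambda>k. \<mu> k - \<nu> k)"

definition fund_wt :: "nat \<Rightarrow> weight" where "fund_wt i = (\<lambda>k. if k = i then 1 else 0)"

text \<open>simple root alpha_i = sum_k a_{ki} varpi_k\<close>
definition sroot :: "nat \<Rightarrow> nat \<Rightarrow> weight" where
  "sroot n i = (\<lambda>k. if k \<in> {1..n} then cartan i k else 0)"

definition tauI :: "nat \<Rightarrow> nat \<Rightarrow> nat" where "tauI n i = Suc n - i"

definition tau_wt :: "nat \<Rightarrow> weight \<Rightarrow> weight" where
  "tau_wt n \<mu> = (\<lambda>k. if k \<in> {1..n} then \<mu> (tauI n k) else 0)"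

definition srefl :: "nat \<Rightarrow> nat \<Rightarrow> weight \<Rightarrow> weight" where
  "srefl n i \<mu> = (\<lambda>k. \<mu> k - \<mu> i * sroot n i k)"

text \<open>A reduced word s_a (s_{a+1} s_a) ... (s_b ... s_a) of the longest element of the
  parabolic Weyl subgroup generated by s_a, ..., s_b, and its action on weights.\<close>
definition wX_word :: "nat \<Rightarrow> nat \<Rightarrow> nat list" where
  "wX_word a b = concat (map (\<lambda>t. rev [a..<a + t + 1]) [0..<b + 1 - a])"

definition wX_act :: "nat \<Rightarrow> nat \<Rightarrow> nat \<Rightarrow> weight \<Rightarrow> weight" where
  "wX_act n a b \<mu> = foldr (srefl n) (wX_word a b) \<mu>"

definition subfield :: "'k::field set \<Rightarrow> bool" where
  "subfield S \<longleftrightarrow> 0 \<in> S \<and> 1 \<in> S \<and> (\<forall>x\<in>S. \<forall>y\<in>S. x + y \<in> S \<and> x * y \<in> S)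
     \<and> (\<forall>x\<in>S. - x \<in> S \<and> inverse x \<in> S)"

definition transcendental_over :: "'k::field set \<Rightarrow> 'k \<Rightarrow> bool" where
  "transcendental_over S s \<longleftrightarrow> (\<forall>p. p \<noteq> 0 \<and> (\<forall>i. coeff p i \<in> S) \<longrightarrow> poly p s \<noteq> 0)"

definition adjoin :: "'k::field set \<Rightarrow> 'k \<Rightarrow> 'k set" where
  "adjoin S s = {poly p s / poly p' s | p p'. (\<forall>i. coeff p i \<in> S) \<and> (\<forall>i. coeff p' i \<in> S)
                   \<and> poly p' s \<noteq> 0}"

text \<open>An associative unital algebra over the field 'k: a ring 'a together with a
  ring homomorphism sc from 'k into the centre of 'a.\<close>
definition scalar_alg :: "('k::field \<Rightarrow> 'a::ring_1) \<Rightarrow> bool" where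
  "scalar_alg sc \<longleftrightarrow> (\<forall>x y. sc (x + y) = sc x + sc y) \<and> (\<forall>x y. sc (x * y) = sc x * sc y)
     \<and> sc 1 = 1 \<and> (\<forall>x a. sc x * a = a * sc x)"

inductive_set alg_gen :: "('k \<Rightarrow> 'a::ring_1) \<Rightarrow> 'a set \<Rightarrow> 'a set" for sc G where
  gen: "x \<in> G \<Longrightarrow> x \<in> alg_gen sc G"
| scal: "sc k \<in> alg_gen sc G"
| add: "x \<in> alg_gen sc G \<Longrightarrow> y \<in> alg_gen sc G \<Longrightarrow> x + y \<in> alg_gen sc G"
| mult: "x \<in> alg_gen sc G \<Longrightarrow> y \<in> alg_gen sc G \<Longrightarrow> x * y \<in> alg_gen sc G"

definition alg_hom_on :: "('k \<Rightarrow> 'a::ring_1) \<Rightarrow> 'a set \<Rightarrow> ('a \<Rightarrow> 'a) \<Rightarrow> bool" where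
  "alg_hom_on sc S f \<longleftrightarrow> f 1 = 1 \<and> (\<forall>x\<in>S. \<forall>y\<in>S. f (x + y) = f x + f y \<and> f (x * y) = f x * f y)
     \<and> (\<forall>k. \<forall>x\<in>S. f (sc k * x) = sc k * f x)"

definition alg_aut_on :: "('k \<Rightarrow> 'a::ring_1) \<Rightarrow> 'a set \<Rightarrow> ('a \<Rightarrow> 'a) \<Rightarrow> bool" where
  "alg_aut_on sc S f \<longleftrightarrow> alg_hom_on sc S f \<and> bij_betw f S S"

definition qbr :: "('k \<Rightarrow> 'a::ring_1) \<Rightarrow> 'k \<Rightarrow> 'a \<Rightarrow> 'a \<Rightarrow> 'a" where
  "qbr sc c a b = a * b - sc c * (b * a)"

definition uq_rels :: "nat \<Rightarrow> ('k::field \<Rightarrow> 'a::ring_1) \<Rightarrow> 'k \<Rightarrow> (nat \<Rightarrow> 'a) \<Rightarrow> (nat \<Rightarrow> 'a)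
    \<Rightarrow> (weight \<Rightarrow> 'a) \<Rightarrow> bool" where
  "uq_rels n sc q E F K \<longleftrightarrow>
     K wzero = 1
   \<and> (\<forall>\<mu>\<in>wt_lattice n. \<forall>\<nu>\<in>wt_lattice n. K \<mu> * K \<nu> = K (wadd \<mu> \<nu>))
   \<and> (\<forall>\<mu>\<in>wt_lattice n. \<forall>i\<in>{1..n}. K \<mu> * E i = sc (q powi \<mu> i) * E i * K \<mu>)
   \<and> (\<forall>\<mu>\<in>wt_lattice n. \<forall>i\<in>{1..n}. K \<mu> * F i = sc (q powi (- \<mu> i)) * F i * K \<mu>)
   \<and> (\<forall>i\<in>{1..n}. \<forall>j\<in>{1..n}. E i * F j - F j * E i =
        (if i = j then sc (1 / (q - 1 / q)) * (K (sroot n i) - K (wneg (sroot n i))) else 0))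
   \<and> (\<forall>i\<in>{1..n}. \<forall>j\<in>{1..n}. cartan i j = -1 \<longrightarrow>
        E i * E i * E j - sc (q + 1 / q) * (E i * E j * E i) + E j * E i * E i = 0
      \<and> F i * F i * F j - sc (q + 1 / q) * (F i * F j * F i) + F j * F i * F i = 0)
   \<and> (\<forall>i\<in>{1..n}. \<forall>j\<in>{1..n}. i \<noteq> j \<and> cartan i j = 0 \<longrightarrow>
        E i * E j = E j * E i \<and> F i * F j = F j * F i)"

definition lusztig :: "nat \<Rightarrow> ('k::field \<Rightarrow> 'a::ring_1) \<Rightarrow> 'k \<Rightarrow> (nat \<Rightarrow> 'a) \<Rightarrow> (nat \<Rightarrow> 'a)
    \<Rightarrow> (weight \<Rightarrow> 'a) \<Rightarrow> nat \<Rightarrow> ('a \<Rightarrow> 'a) \<Rightarrow> bool" where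
  "lusztig n sc q E F K i T \<longleftrightarrow>
     alg_aut_on sc UNIV T
   \<and> T (E i) = - (F i * K (sroot n i))
   \<and> T (F i) = - (K (wneg (sroot n i)) * E i)
   \<and> (\<forall>\<mu>\<in>wt_lattice n. T (K \<mu>) = K (srefl n i \<mu>))
   \<and> (\<forall>j\<in>{1..n}. j \<noteq> i \<and> cartan i j = 0 \<longrightarrow> T (E j) = E j \<and> T (F j) = F j)
   \<and> (\<forall>j\<in>{1..n}. cartan i j = -1 \<longrightarrow>
        T (E j) = qbr sc (1 / q) (E i) (E j) \<and> T (F j) = qbr sc q (F j) (F i))"

definition Xset :: "nat \<Rightarrow> nat \<Rightarrow> nat set" where "Xset n r = {r + 1..n - r}"

definition EXp :: "('k::field \<Rightarrow> 'a::ring_1) \<Rightarrow> 'k \<Rightarrow> (nat \<Rightarrow> 'a) \<Rightarrow> nat \<Rightarrow> nat \<Rightarrow> 'a" where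
  "EXp sc q E n r = foldr (\<lambda>k acc. qbr sc (1 / q) (E k) acc) [r + 1..<n - r] (E (n - r))"
definition EXm :: "('k::field \<Rightarrow> 'a::ring_1) \<Rightarrow> 'k \<Rightarrow> (nat \<Rightarrow> 'a) \<Rightarrow> nat \<Rightarrow> nat \<Rightarrow> 'a" where
  "EXm sc q E n r = foldr (\<lambda>k acc. qbr sc (1 / q) (E k) acc) (rev [r + 2..<n - r + 1]) (E (r + 1))"
definition FXp :: "('k::field \<Rightarrow> 'a::ring_1) \<Rightarrow> 'k \<Rightarrow> (nat \<Rightarrow> 'a) \<Rightarrow> nat \<Rightarrow> nat \<Rightarrow> 'a" where
  "FXp sc q F n r = foldr (\<lambda>k acc. qbr sc q (F k) acc) [r + 1..<n - r] (F (n - r))"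
definition FXm :: "('k::field \<Rightarrow> 'a::ring_1) \<Rightarrow> 'k \<Rightarrow> (nat \<Rightarrow> 'a) \<Rightarrow> nat \<Rightarrow> nat \<Rightarrow> 'a" where
  "FXm sc q F n r = foldr (\<lambda>k acc. qbr sc q (F k) acc) (rev [r + 2..<n - r + 1]) (F (r + 1))"

definition KXinv :: "(weight \<Rightarrow> 'a) \<Rightarrow> nat \<Rightarrow> nat \<Rightarrow> 'a" where
  "KXinv K n r = K (\<lambda>k. - (\<Sum>j\<in>Xset n r. sroot n j k))"

definition Lw :: "(weight \<Rightarrow> 'a) \<Rightarrow> nat \<Rightarrow> nat \<Rightarrow> 'a" where
  "Lw K n i = K (wsub (sroot n i) (sroot n (tauI n i)))"

definition Kvp :: "(weight \<Rightarrow> 'a) \<Rightarrow> nat \<Rightarrow> nat \<Rightarrow> 'a" where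
  "Kvp K n i = K (wsub (fund_wt i) (fund_wt (tauI n i)))"

definition Bgen :: "nat \<Rightarrow> nat \<Rightarrow> ('k::field \<Rightarrow> 'a::ring_1) \<Rightarrow> 'k \<Rightarrow> (nat \<Rightarrow> 'k) \<Rightarrow> (nat \<Rightarrow> 'a)
    \<Rightarrow> (nat \<Rightarrow> 'a) \<Rightarrow> (weight \<Rightarrow> 'a) \<Rightarrow> nat \<Rightarrow> 'a" where
  "Bgen n r sc q c E F K j =
    (if j = r then F r - sc (c r) * qbr sc (1 / q) (EXp sc q E n r) (E (tauI n r)) * K (wneg (sroot n r))
     else if j = tauI n r then
       F j - sc (c j) * qbr sc (1 / q) (EXm sc q E n r) (E r) * K (wneg (sroot n j))
     else F j - sc (c j) * E (tauI n j) * K (wneg (sroot n j)))"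

definition MX :: "nat \<Rightarrow> nat \<Rightarrow> ('k \<Rightarrow> 'a::ring_1) \<Rightarrow> (nat \<Rightarrow> 'a) \<Rightarrow> (nat \<Rightarrow> 'a)
    \<Rightarrow> (weight \<Rightarrow> 'a) \<Rightarrow> 'a set" where
  "MX n r sc E F K = alg_gen sc ((E ` Xset n r) \<union> (F ` Xset n r)
      \<union> ((\<lambda>j. K (sroot n j)) ` Xset n r) \<union> ((\<lambda>j. K (wneg (sroot n j))) ` Xset n r))"

definition U0Theta :: "nat \<Rightarrow> nat \<Rightarrow> ('k \<Rightarrow> 'a::ring_1) \<Rightarrow> (weight \<Rightarrow> 'a) \<Rightarrow> 'a set" where
  "U0Theta n r sc K = alg_gen sc (K ` {\<mu> \<in> wt_lattice n.
      wneg (wX_act n (r + 1) (n - r) (tau_wt n \<mu>)) = \<mu>})"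

definition MXU0 :: "nat \<Rightarrow> nat \<Rightarrow> ('k \<Rightarrow> 'a::ring_1) \<Rightarrow> (nat \<Rightarrow> 'a) \<Rightarrow> (nat \<Rightarrow> 'a)
    \<Rightarrow> (weight \<Rightarrow> 'a) \<Rightarrow> 'a set" where
  "MXU0 n r sc E F K = {m * u | m u. m \<in> MX n r sc E F K \<and> u \<in> U0Theta n r sc K}"

definition Bc :: "nat \<Rightarrow> nat \<Rightarrow> ('k \<Rightarrow> 'a::ring_1) \<Rightarrow> (nat \<Rightarrow> 'a) \<Rightarrow> (nat \<Rightarrow> 'a)
    \<Rightarrow> (weight \<Rightarrow> 'a) \<Rightarrow> (nat \<Rightarrow> 'a) \<Rightarrow> 'a set" where
  "Bc n r sc E F K B = alg_gen sc (MX n r sc E F K \<union> U0Theta n r sc K \<union> B ` ({1..n} - Xset n r))"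

text \<open>tilde-tau_i for 1 <= i <= r-1. Here s = q^{1/2} and g i is a square root of c_i,
  so (q c_i)^{-1/2} = 1 / (s * g i).\<close>
definition ttau_i_spec :: "nat \<Rightarrow> nat \<Rightarrow> ('k::field \<Rightarrow> 'a::ring_1) \<Rightarrow> 'k \<Rightarrow> (nat \<Rightarrow> 'k)
    \<Rightarrow> (nat \<Rightarrow> 'a) \<Rightarrow> (nat \<Rightarrow> 'a) \<Rightarrow> (weight \<Rightarrow> 'a) \<Rightarrow> (nat \<Rightarrow> 'a \<Rightarrow> 'a) \<Rightarrow> (nat \<Rightarrow> 'a)
    \<Rightarrow> nat \<Rightarrow> ('a \<Rightarrow> 'a) \<Rightarrow> bool" where
  "ttau_i_spec n r sc s g E F K T B i t \<longleftrightarrow>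
     alg_aut_on sc (Bc n r sc E F K B) t
   \<and> (\<forall>x\<in>MXU0 n r sc E F K. t x = T i (T (tauI n i) x))
   \<and> (\<forall>j\<in>{1..n} - Xset n r.
        (j \<in> {i, tauI n i} \<longrightarrow> t (B j) = sc (1 / s^2) * B (tauI n j) * Lw K n (tauI n j))
      \<and> (cartan i j = -1 \<longrightarrow> t (B j) = sc (1 / (s * g i)) * qbr sc (s^2) (B j) (B i))
      \<and> (cartan (tauI n i) j = -1 \<longrightarrow>
           t (B j) = sc (1 / (s * g (tauI n i))) * qbr sc (s^2) (B j) (B (tauI n i)))
      \<and> (cartan i j = 0 \<and> cartan (tauI n i) j = 0 \<longrightarrow> t (B j) = B j))"

text \<open>tilde-tau_r; C = (q c_r c_{tau(r)})^{-1/2} = 1 / (s * g r * g (tau r)).\<close>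
definition ttau_r_spec :: "nat \<Rightarrow> nat \<Rightarrow> ('k::field \<Rightarrow> 'a::ring_1) \<Rightarrow> 'k \<Rightarrow> (nat \<Rightarrow> 'k)
    \<Rightarrow> (nat \<Rightarrow> 'k) \<Rightarrow> (nat \<Rightarrow> 'a) \<Rightarrow> (nat \<Rightarrow> 'a) \<Rightarrow> (weight \<Rightarrow> 'a) \<Rightarrow> (nat \<Rightarrow> 'a \<Rightarrow> 'a)
    \<Rightarrow> (nat \<Rightarrow> 'a) \<Rightarrow> ('a \<Rightarrow> 'a) \<Rightarrow> bool" where
  "ttau_r_spec n r sc s c g E F K T B t \<longleftrightarrow>
    (let q = s^2; tr = tauI n r; C = 1 / (s * g r * g tr) in
     alg_aut_on sc (Bc n r sc E F K B) t
   \<and> (\<forall>x\<in>MXU0 n r sc E F K. t x = foldr T ([r..<n - r + 2] @ rev [r..<n - r + 1]) x)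
   \<and> t (B r) = sc (1 / q) * B r * Lw K n r * Kvp K n (r + 1)
   \<and> t (B tr) = sc (1 / q) * B tr * Lw K n tr * Kvp K n (tauI n (r + 1))
   \<and> (2 \<le> r \<longrightarrow> t (B (r - 1)) = sc C *
        (qbr sc q (B (r - 1)) (qbr sc q (B r) (qbr sc q (FXp sc q F n r) (B tr)))
         + sc (q * c tr) * B (r - 1) * Lw K n r * KXinv K n r))
   \<and> (2 \<le> r \<longrightarrow> t (B (tauI n (r - 1))) = sc C *
        (qbr sc q (B (tauI n (r - 1))) (qbr sc q (B tr) (qbr sc q (FXm sc q F n r) (B r)))
         + sc (q * c r) * B (tauI n (r - 1)) * Lw K n tr * KXinv K n r))
   \<and> (\<forall>j\<in>{1..n} - Xset n r. j \<notin> {r - 1, r, tr, tauI n (r - 1)} \<longrightarrow> t (B j) = B j))"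

end

theory Submission
  imports Defs "HOL-Combinatorics.Transposition"
begin

text \<open>
  Write \<open>\<tau>\<^sub>i = tt i\<close> and \<open>\<tau>\<^sub>r = tt r\<close>. For \<open>i \<le> r - 2\<close> the nodes \<open>i\<close> and \<open>\<tau>(i)\<close> lie at
  distance at least two from the block \<open>{r, \<dots>, \<tau>(r)}\<close> on which \<open>\<tau>\<^sub>r\<close> acts. So \<open>\<tau>\<^sub>r\<close> fixes the
  generators \<open>B\<^sub>p\<close>, \<open>L\<^sub>p\<close> of the far nodes, and \<open>\<tau>\<^sub>i\<close> fixes the generators of the block:
  \<open>B\<^sub>r\<close>, \<open>B\<^bsub>\<tau>(r)\<^esub>\<close>, \<open>F\<^sub>X\<^sup>+\<close>, \<open>F\<^sub>X\<^sup>-\<close> and the \<open>K\<^sub>\<mu>\<close> in \<open>U\<^sup>0\<^sub>\<Theta>\<close> whose weight vanishes at the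
  far nodes (membership in \<open>U\<^sup>0\<^sub>\<Theta>\<close> is checked in \<open>\<epsilon>\<close>-coordinates, where \<open>w\<^sub>X\<close> and \<open>\<tau>\<close> act
  by permutations). This settles every \<open>B\<^sub>j\<close> except \<open>j \<in> {r - 1, \<tau>(r - 1)}\<close> with
  \<open>i = r - 2\<close>. There \<open>\<tau>\<^sub>i(B\<^sub>j) = a [B\<^sub>j, B\<^sub>p]\<^sub>q\<close> and \<open>\<tau>\<^sub>r(B\<^sub>j) = C ([B\<^sub>j, Z]\<^sub>q + d B\<^sub>j W)\<close>
  with \<open>Z\<close>, \<open>W\<close> in the block subalgebra, which commutes with \<open>B\<^sub>p\<close>; the two orders of
  applying the automorphisms then agree by an exchange rule for nested \<open>q\<close>-brackets.
\<close>

section \<open>Subalgebras generated by a set\<close>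

lemma alg_gen_subset:
  assumes "G \<subseteq> alg_gen sc H"
  shows "alg_gen sc G \<subseteq> alg_gen sc H"
proof
  fix x assume "x \<in> alg_gen sc G"
  then show "x \<in> alg_gen sc H"
    by induction (use assms in \<open>auto intro: alg_gen.intros\<close>)
qed

lemma alg_gen_UNIV [simp]: "alg_gen sc UNIV = UNIV"
  by (auto intro: alg_gen.gen)

lemma alg_hom_on_add: "alg_hom_on sc S f \<Longrightarrow> x \<in> S \<Longrightarrow> y \<in> S \<Longrightarrow> f (x + y) = f x + f y"
  unfolding alg_hom_on_def by blast

lemma alg_hom_on_mult: "alg_hom_on sc S f \<Longrightarrow> x \<in> S \<Longrightarrow> y \<in> S \<Longrightarrow> f (x * y) = f x * f y"
  unfolding alg_hom_on_def by blast

lemma alg_hom_on_smult: "alg_hom_on sc S f \<Longrightarrow> x \<in> S \<Longrightarrow> f (sc k * x) = sc k * f x"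
  unfolding alg_hom_on_def by blast

context
  fixes sc :: "'k::field \<Rightarrow> 'a::ring_1"
  assumes sc: "scalar_alg sc"
begin

lemma scalar_central: "sc x * a = a * sc x"
  using sc unfolding scalar_alg_def by blast

lemma scalar_one: "sc 1 = 1"
  using sc unfolding scalar_alg_def by blast

lemma scalar_minus_one: "sc (- 1) = - 1"
proof -
  have "sc (- 1) + sc 1 = sc 0" "sc 0 + sc 0 = sc 0"
    using sc unfolding scalar_alg_def by (metis add.left_inverse add_0)+
  then show ?thesis by (simp add: scalar_one eq_neg_iff_add_eq_0)
qed

lemma scalar_left_commute: "a * (sc k * b) = sc k * (a * b)"
  by (simp only: mult.assoc[symmetric] scalar_central[of k a])

lemma alg_gen_one: "1 \<in> alg_gen sc G"
  using alg_gen.scal[of sc 1 G] by (simp add: scalar_one)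

lemma alg_gen_smult: "x \<in> alg_gen sc G \<Longrightarrow> sc k * x \<in> alg_gen sc G"
  by (simp add: alg_gen.mult alg_gen.scal)

lemma alg_gen_diff:
  assumes "x \<in> alg_gen sc G" "y \<in> alg_gen sc G"
  shows "x - y \<in> alg_gen sc G"
  using alg_gen.add[OF assms(1) alg_gen_smult[OF assms(2), of "- 1"]] by (simp add: scalar_minus_one)

lemma alg_gen_qbr: "x \<in> alg_gen sc G \<Longrightarrow> y \<in> alg_gen sc G \<Longrightarrow> qbr sc c x y \<in> alg_gen sc G"
  unfolding qbr_def by (intro alg_gen_diff alg_gen_smult alg_gen.mult)

lemma alg_gen_foldr_qbr:
  assumes "\<forall>k\<in>set ks. X k \<in> alg_gen sc G" "b \<in> alg_gen sc G"
  shows "foldr (\<lambda>k acc. qbr sc c (X k) acc) ks b \<in> alg_gen sc G"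
  using assms by (induction ks) (auto intro: alg_gen_qbr)

lemma alg_hom_on_diff:
  assumes "alg_hom_on sc (alg_gen sc G) f" "x \<in> alg_gen sc G" "y \<in> alg_gen sc G"
  shows "f (x - y) = f x - f y"
proof -
  have "f (x + sc (- 1) * y) = f x + sc (- 1) * f y"
    using assms alg_gen_smult alg_hom_on_add alg_hom_on_smult by metis
  then show ?thesis by (simp add: scalar_minus_one)
qed

lemma alg_hom_on_qbr:
  assumes "alg_hom_on sc (alg_gen sc G) f" "x \<in> alg_gen sc G" "y \<in> alg_gen sc G"
  shows "f (qbr sc c x y) = qbr sc c (f x) (f y)"
  using assms alg_hom_on_diff[OF assms(1)] alg_hom_on_mult[OF assms(1)]
    alg_hom_on_smult[OF assms(1)] unfolding qbr_def
  by (simp add: alg_gen.mult alg_gen_smult)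

lemma alg_hom_fixes_alg_gen:
  assumes f: "alg_hom_on sc (alg_gen sc H) f" and G: "G \<subseteq> alg_gen sc H"
    and fixed: "\<forall>y\<in>G. f y = y" and x: "x \<in> alg_gen sc G"
  shows "f x = x"
  using x
proof induction
  case (scal k)
  have "f (sc k * 1) = sc k * f 1"
    using alg_hom_on_smult[OF f alg_gen_one] .
  then show ?case using f unfolding alg_hom_on_def by simp
next
  case (add x y)
  then have "x \<in> alg_gen sc H" "y \<in> alg_gen sc H" using alg_gen_subset[OF G] by auto
  then show ?case using alg_hom_on_add[OF f] add.IH by simp
next
  case (mult x y)
  then have "x \<in> alg_gen sc H" "y \<in> alg_gen sc H" using alg_gen_subset[OF G] by auto
  then show ?case using alg_hom_on_mult[OF f] mult.IH by simp
qed (use fixed in blast)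

lemma commute_alg_gen:
  assumes "\<forall>g\<in>G. g * y = y * g" "x \<in> alg_gen sc G"
  shows "x * y = y * x"
  using assms(2)
proof induction
  case (scal k) show ?case by (rule scalar_central)
next
  case (add u v) then show ?case by (simp add: algebra_simps)
next
  case (mult u v) then show ?case by (metis mult.assoc)
qed (use assms(1) in blast)

lemma alg_gen_commute:
  assumes "\<forall>g\<in>G. \<forall>h\<in>H. g * h = h * g" "x \<in> alg_gen sc G" "y \<in> alg_gen sc H"
  shows "x * y = y * x"
proof (rule commute_alg_gen[OF _ assms(2)])
  show "\<forall>g\<in>G. g * y = y * g"
    using commute_alg_gen[OF _ assms(3)] assms(1) by metis
qed

section \<open>Nested \<open>q\<close>-brackets\<close>

lemma qbr_smult_left: "qbr sc q (sc a * X) b = sc a * qbr sc q X b"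
  unfolding qbr_def
  by (simp add: algebra_simps scalar_left_commute[of b] scalar_left_commute[of "sc q"])

lemma qbr_add_left: "qbr sc q (X + Y) b = qbr sc q X b + qbr sc q Y b"
  unfolding qbr_def by (simp add: algebra_simps)

lemma qbr_exchange:
  assumes "Z * b = b * Z"
  shows "qbr sc q (qbr sc q A Z) b = qbr sc q (qbr sc q A b) Z"
proof -
  have "Z * (b * X) = b * (Z * X)" for X by (metis assms mult.assoc)
  then show ?thesis unfolding qbr_def
    by (simp add: algebra_simps scalar_left_commute[of A] scalar_left_commute[of b]
        scalar_left_commute[of Z] assms)
qed

lemma qbr_mult_central:
  assumes "W * b = b * W"
  shows "qbr sc q (A * W) b = qbr sc q A b * W"
proof -
  have "W * (b * X) = b * (W * X)" for X by (metis assms mult.assoc)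
  then show ?thesis unfolding qbr_def
    by (simp add: algebra_simps scalar_left_commute[of A] scalar_left_commute[of b]
        scalar_left_commute[of W] assms)
qed

lemma twisted_qbr_exchange:
  assumes "Z * b = b * Z" "W * b = b * W"
  shows "sc a * qbr sc q (sc C * (qbr sc q A Z + sc d * (A * W))) b
       = sc C * (qbr sc q (sc a * qbr sc q A b) Z + sc d * (sc a * qbr sc q A b * W))"
proof -
  have "sc x * (sc y * P) = sc y * (sc x * P)" for x y P
    by (simp only: mult.assoc[symmetric] scalar_central[of x "sc y"])
  then show ?thesis
    by (simp only: qbr_smult_left qbr_add_left qbr_exchange[OF assms(1)]
        qbr_mult_central[OF assms(2)] distrib_left mult.assoc)
qed

text \<open>Here \<open>f A\<close> has the shape of \<open>\<tau>\<^sub>r(B\<^bsub>r-1\<^esub>)\<close> and \<open>g A\<close> that of \<open>\<tau>\<^bsub>r-2\<^esub>(B\<^bsub>r-1\<^esub>)\<close>.\<close>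

lemma alg_homs_commute_on_twisted_qbr:
  assumes f: "alg_hom_on sc (alg_gen sc G) f" and g: "alg_hom_on sc (alg_gen sc G) g"
    and A: "A \<in> alg_gen sc G" and b: "b \<in> alg_gen sc G"
    and Z: "Z \<in> alg_gen sc G" and W: "W \<in> alg_gen sc G"
    and fA: "f A = sc C * (qbr sc q A Z + sc d * (A * W))" and gA: "g A = sc a * qbr sc q A b"
    and fixed: "f b = b" "g Z = Z" "g W = W"
    and commute: "Z * b = b * Z" "W * b = b * W"
  shows "f (g A) = g (f A)"
proof -
  have AZW: "qbr sc q A Z \<in> alg_gen sc G" "sc d * (A * W) \<in> alg_gen sc G" "A * W \<in> alg_gen sc G"
    using A Z W by (auto intro: alg_gen_qbr alg_gen_smult alg_gen.mult)
  have "f (g A) = sc a * qbr sc q (f A) b"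
    using gA alg_hom_on_smult[OF f alg_gen_qbr[OF A b]] alg_hom_on_qbr[OF f A b] fixed(1)
    by simp
  also have "\<dots> = sc C * (qbr sc q (g A) Z + sc d * (g A * W))"
    unfolding fA gA by (rule twisted_qbr_exchange[OF commute])
  also have "\<dots> = g (f A)"
    using fA alg_hom_on_add[OF g] alg_hom_on_mult[OF g] alg_hom_on_smult[OF g]
      alg_hom_on_qbr[OF g A Z] fixed(2,3) A W AZW alg_gen.add[OF AZW(1,2)]
    by simp
  finally show ?thesis .
qed

end

section \<open>Weights in \<open>\<epsilon>\<close>-coordinates\<close>

text \<open>With \<open>\<varpi>\<^sub>k = \<epsilon>\<^sub>1 + \<dots> + \<epsilon>\<^sub>k\<close>, the weight \<open>\<Sum>\<^sub>k \<mu> k \<varpi>\<^sub>k\<close> has \<open>\<epsilon>\<^sub>m\<close>-coefficient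
  \<open>\<Sum>\<^bsub>l \<ge> m\<^esub> \<mu> l\<close>; this normalises the coordinate \<open>n + 1\<close> to \<open>0\<close>.\<close>

definition eps_coord :: "nat \<Rightarrow> weight \<Rightarrow> nat \<Rightarrow> int" where
  "eps_coord n \<mu> m = (\<Sum>l = m..n. \<mu> l)"

lemma eps_coord_Suc: "m \<le> n \<Longrightarrow> eps_coord n \<mu> m = \<mu> m + eps_coord n \<mu> (Suc m)"
  unfolding eps_coord_def by (simp add: sum.atLeast_Suc_atMost)

lemma eps_coord_inject:
  assumes "\<mu> \<in> wt_lattice n" "\<nu> \<in> wt_lattice n"
    and "\<forall>m\<in>{1..n + 1}. eps_coord n \<mu> m = eps_coord n \<nu> m"
  shows "\<mu> = \<nu>"
proof
  fix l
  show "\<mu> l = \<nu> l"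
  proof (cases "l \<in> {1..n}")
    case True
    then show ?thesis using eps_coord_Suc[of l n \<mu>] eps_coord_Suc[of l n \<nu>] assms(3) by auto
  next
    case False
    then show ?thesis using assms(1,2) unfolding wt_lattice_def by auto
  qed
qed

lemma eps_coord_wsub: "eps_coord n (wsub \<mu> \<nu>) m = eps_coord n \<mu> m - eps_coord n \<nu> m"
  unfolding eps_coord_def wsub_def by (simp add: sum_subtractf)

lemma eps_coord_wneg: "eps_coord n (wneg \<mu>) m = - eps_coord n \<mu> m"
  unfolding eps_coord_def wneg_def by (simp add: sum_negf)

lemma eps_coord_fund_wt:
  "p \<in> {1..n} \<Longrightarrow> eps_coord n (fund_wt p) m = (if m \<le> p then 1 else 0)"
  unfolding eps_coord_def fund_wt_def by (simp add: sum.delta)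

lemma eps_coord_sroot:
  assumes "k \<in> {1..n}" "m \<in> {1..n + 1}"
  shows "eps_coord n (sroot n k) m =
    (if m = k then 1 else 0) - (if m = k + 1 then 1 else 0) + (if k = n then 1 else 0)"
proof -
  have "eps_coord n (sroot n k) m = (\<Sum>l = m..n. (if l = k then 2 else 0)
      - (if l = k + 1 then 1 else 0) - (if l = k - 1 then 1 else 0))"
    unfolding eps_coord_def sroot_def cartan_def using assms by (intro sum.cong) auto
  also have "\<dots> = (if m \<le> k \<and> k \<le> n then 2 else 0) - (if m \<le> k + 1 \<and> k + 1 \<le> n then 1 else 0)
      - (if m \<le> k - 1 \<and> k - 1 \<le> n then 1 else 0)"
    by (simp add: sum_subtractf sum.delta)
  also have "\<dots> = (if m = k then 1 else 0) - (if m = k + 1 then 1 else 0) + (if k = n then 1 else 0)"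
    using assms by auto
  finally show ?thesis .
qed

lemma eps_coord_srefl:
  assumes "1 \<le> k" "k < n" "m \<in> {1..n + 1}"
  shows "eps_coord n (srefl n k \<mu>) m = eps_coord n \<mu> (transpose k (Suc k) m)"
proof -
  have "eps_coord n (srefl n k \<mu>) m = eps_coord n \<mu> m - \<mu> k * eps_coord n (sroot n k) m"
    unfolding eps_coord_def srefl_def by (simp add: sum_subtractf sum_distrib_left)
  also have "\<dots> = eps_coord n \<mu> m - \<mu> k * ((if m = k then 1 else 0) - (if m = k + 1 then 1 else 0))"
    using eps_coord_sroot[of k n m] assms by simp
  also have "\<dots> = eps_coord n \<mu> (transpose k (Suc k) m)"
    using eps_coord_Suc[of k n \<mu>] assms unfolding transpose_def by auto
  finally show ?thesis .
qed

lemma eps_coord_foldr_srefl: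
  assumes "\<forall>k\<in>set ks. 1 \<le> k \<and> k < n" "m \<in> {1..n + 1}"
  shows "eps_coord n (foldr (srefl n) ks \<mu>) m = eps_coord n \<mu> (fold (\<lambda>k. transpose k (Suc k)) ks m)"
  using assms
proof (induction ks arbitrary: m)
  case (Cons k ks)
  have "transpose k (Suc k) m \<in> {1..n + 1}"
    using Cons.prems unfolding transpose_def by auto
  then show ?case using Cons by (simp add: eps_coord_srefl)
qed auto

lemma fold_transpose_cycle:
  "fold (\<lambda>k. transpose k (Suc k)) (rev [a..<a + t + 1]) m =
     (if a \<le> m \<and> m \<le> a + t then m + 1 else if m = a + t + 1 then a else m)"
  by (induction t arbitrary: m) (auto simp: transpose_def)

lemma fold_transpose_reversal:
  "fold (\<lambda>k. transpose k (Suc k)) (concat (map (\<lambda>t. rev [a..<a + t + 1]) [0..<t])) m =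
     (if a \<le> m \<and> m \<le> a + t then 2 * a + t - m else m)"
proof (induction t arbitrary: m)
  case (Suc t)
  have split: "concat (map (\<lambda>t. rev [a..<a + t + 1]) [0..<Suc t])
      = concat (map (\<lambda>t. rev [a..<a + t + 1]) [0..<t]) @ rev [a..<a + t + 1]"
    by simp
  show ?case
    unfolding split fold_append comp_def Suc.IH fold_transpose_cycle by auto
qed auto

lemma fold_transpose_wX_word:
  "a \<le> b + 1 \<Longrightarrow> fold (\<lambda>k. transpose k (Suc k)) (wX_word a b) m =
     (if a \<le> m \<and> m \<le> b + 1 then a + b + 1 - m else m)"
  unfolding wX_word_def using fold_transpose_reversal[of a "b + 1 - a" m] by auto

lemma eps_coord_tau_wt:
  assumes "m \<in> {1..n + 1}"
  shows "eps_coord n (tau_wt n \<mu>) m = eps_coord n \<mu> 1 - eps_coord n \<mu> (n + 2 - m)"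
proof -
  have "eps_coord n (tau_wt n \<mu>) m = (\<Sum>l = m..n. \<mu> (Suc n - l))"
    unfolding eps_coord_def tau_wt_def tauI_def using assms by (intro sum.cong) auto
  also have "\<dots> = (\<Sum>l = 1..n + 1 - m. \<mu> l)"
    by (rule sum.reindex_bij_witness[where i="\<lambda>l. Suc n - l" and j="\<lambda>l. Suc n - l"])
      (use assms in auto)
  also have "\<dots> = eps_coord n \<mu> 1 - eps_coord n \<mu> (n + 2 - m)"
    using sum.ub_add_nat[of 1 "n + 1 - m" \<mu> "m - 1"] assms
    unfolding eps_coord_def by (simp add: Suc_diff_le)
  finally show ?thesis .
qed

lemma wt_lattice_closed [simp]:
  "tau_wt n \<mu> \<in> wt_lattice n" "sroot n k \<in> wt_lattice n"
  "k \<in> {1..n} \<Longrightarrow> fund_wt k \<in> wt_lattice n"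
  "\<mu> \<in> wt_lattice n \<Longrightarrow> wneg \<mu> \<in> wt_lattice n"
  "\<mu> \<in> wt_lattice n \<Longrightarrow> \<nu> \<in> wt_lattice n \<Longrightarrow> wsub \<mu> \<nu> \<in> wt_lattice n"
  "\<mu> \<in> wt_lattice n \<Longrightarrow> srefl n k \<mu> \<in> wt_lattice n"
  unfolding wt_lattice_def tau_wt_def sroot_def fund_wt_def wneg_def wsub_def srefl_def by auto

lemma foldr_srefl_in_wt_lattice: "\<mu> \<in> wt_lattice n \<Longrightarrow> foldr (srefl n) ks \<mu> \<in> wt_lattice n"
  by (induction ks) auto

definition theta_invariant :: "nat \<Rightarrow> nat \<Rightarrow> weight \<Rightarrow> bool" where
  "theta_invariant n r \<mu> \<longleftrightarrow> \<mu> \<in> wt_lattice n \<and> wneg (wX_act n (r + 1) (n - r) (tau_wt n \<mu>)) = \<mu>"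

text \<open>In \<open>\<epsilon>\<close>-coordinates \<open>w\<^sub>X\<close> reverses the block \<open>r + 1, \<dots>, n - r + 1\<close> and, once the first
  coordinate vanishes, \<open>-\<tau>\<close> reverses all of \<open>1, \<dots>, n + 1\<close>; so \<open>-w\<^sub>X \<tau>\<close> only reflects the
  coordinates outside the block.\<close>

lemma theta_invariant_if_eps_symmetric:
  assumes "\<mu> \<in> wt_lattice n" "1 \<le> r" "2 * r < n" "eps_coord n \<mu> 1 = 0"
    and symmetric: "\<forall>m\<in>{1..n + 1}. m \<le> r \<or> n - r + 2 \<le> m \<longrightarrow>
      eps_coord n \<mu> m = eps_coord n \<mu> (n + 2 - m)"
  shows "theta_invariant n r \<mu>"
  unfolding theta_invariant_def
proof (intro conjI assms(1) eps_coord_inject[OF _ assms(1)] ballI)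
  show "wneg (wX_act n (r + 1) (n - r) (tau_wt n \<mu>)) \<in> wt_lattice n"
    unfolding wX_act_def by (simp add: foldr_srefl_in_wt_lattice)
  fix m assume m: "m \<in> {1..n + 1}"
  define p where "p = (if r + 1 \<le> m \<and> m \<le> n - r + 1 then n + 2 - m else m)"
  have letters: "\<forall>k\<in>set (wX_word (r + 1) (n - r)). 1 \<le> k \<and> k < n"
    using assms(2) unfolding wX_word_def by auto
  have "fold (\<lambda>k. transpose k (Suc k)) (wX_word (r + 1) (n - r)) m = p"
    unfolding p_def using fold_transpose_wX_word[of "r + 1" "n - r" m] assms(3) by auto
  moreover have "p \<in> {1..n + 1}" unfolding p_def using m assms(3) by auto
  ultimately have "eps_coord n (wneg (wX_act n (r + 1) (n - r) (tau_wt n \<mu>))) m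
      = eps_coord n \<mu> (n + 2 - p)"
    unfolding eps_coord_wneg wX_act_def eps_coord_foldr_srefl[OF letters m]
    using eps_coord_tau_wt[of p n \<mu>] assms(4) by simp
  also have "\<dots> = eps_coord n \<mu> m"
    using symmetric m unfolding p_def by auto
  finally show "eps_coord n (wneg (wX_act n (r + 1) (n - r) (tau_wt n \<mu>))) m = eps_coord n \<mu> m" .
qed

lemma theta_invariant_sroot_diff:
  assumes "1 \<le> r" "2 * r < n" "p \<in> {1..n}"
  shows "theta_invariant n r (wsub (sroot n p) (sroot n (tauI n p)))"
proof (rule theta_invariant_if_eps_symmetric)
  have tp: "Suc n - p \<in> {1..n}" using assms(3) by auto
  have eps: "eps_coord n (wsub (sroot n p) (sroot n (tauI n p))) m =
    (if m = p then 1 else 0) - (if m = p + 1 then 1 else 0) + (if p = n then 1 else 0)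
    - ((if m = Suc n - p then 1 else 0) - (if m = Suc n - p + 1 then 1 else 0)
       + (if Suc n - p = n then 1 else 0))" if "m \<in> {1..n + 1}" for m
    using eps_coord_sroot[OF assms(3) that] eps_coord_sroot[OF tp that]
    by (simp add: eps_coord_wsub tauI_def)
  show "eps_coord n (wsub (sroot n p) (sroot n (tauI n p))) 1 = 0"
    using eps[of 1] assms(3) by auto
  show "\<forall>m\<in>{1..n + 1}. m \<le> r \<or> n - r + 2 \<le> m \<longrightarrow>
      eps_coord n (wsub (sroot n p) (sroot n (tauI n p))) m
      = eps_coord n (wsub (sroot n p) (sroot n (tauI n p))) (n + 2 - m)"
  proof (intro ballI impI)
    fix m assume m: "m \<in> {1..n + 1}"
    then have m': "n + 2 - m \<in> {1..n + 1}" by auto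
    have "(n + 2 - m = p) = (m = Suc n - p + 1)" "(n + 2 - m = p + 1) = (m = Suc n - p)"
      "(n + 2 - m = Suc n - p) = (m = p + 1)" "(n + 2 - m = Suc n - p + 1) = (m = p)"
      using assms(3) m by auto
    then show "eps_coord n (wsub (sroot n p) (sroot n (tauI n p))) m
      = eps_coord n (wsub (sroot n p) (sroot n (tauI n p))) (n + 2 - m)"
      unfolding eps[OF m] eps[OF m'] by (simp add: algebra_simps)
  qed
qed (use assms in auto)

lemma theta_invariant_fund_wt_diff:
  assumes "1 \<le> r" "2 * r < n" "p \<in> {1..n}"
  shows "theta_invariant n r (wsub (fund_wt p) (fund_wt (tauI n p)))"
proof (rule theta_invariant_if_eps_symmetric)
  have tp: "tauI n p \<in> {1..n}" using assms(3) unfolding tauI_def by auto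
  then have eps: "eps_coord n (wsub (fund_wt p) (fund_wt (tauI n p))) m
      = (if m \<le> p then 1 else 0) - (if m \<le> Suc n - p then 1 else 0)" for m
    using assms(3) by (simp add: eps_coord_wsub eps_coord_fund_wt tauI_def)
  then show "eps_coord n (wsub (fund_wt p) (fund_wt (tauI n p))) 1 = 0"
    using assms(3) by auto
  show "\<forall>m\<in>{1..n + 1}. m \<le> r \<or> n - r + 2 \<le> m \<longrightarrow>
      eps_coord n (wsub (fund_wt p) (fund_wt (tauI n p))) m
      = eps_coord n (wsub (fund_wt p) (fund_wt (tauI n p))) (n + 2 - m)"
    unfolding eps using assms(3) by auto
  show "wsub (fund_wt p) (fund_wt (tauI n p)) \<in> wt_lattice n"
    using assms(3) tp by simp
qed (use assms in auto)

definition X_root_sum :: "nat \<Rightarrow> nat \<Rightarrow> weight" where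
  "X_root_sum n r = (\<lambda>k. \<Sum>j\<in>Xset n r. sroot n j k)"

lemma KXinv_eq: "KXinv K n r = K (wneg (X_root_sum n r))"
  unfolding KXinv_def X_root_sum_def wneg_def ..

lemma eps_coord_X_root_sum:
  assumes "1 \<le> r" "m \<in> {1..n + 1}" "m \<le> r \<or> n - r + 2 \<le> m"
  shows "eps_coord n (X_root_sum n r) m = 0"
proof -
  have "eps_coord n (X_root_sum n r) m = (\<Sum>j\<in>Xset n r. eps_coord n (sroot n j) m)"
    unfolding eps_coord_def X_root_sum_def by (rule sum.swap)
  also have "\<dots> = 0"
    using assms by (intro sum.neutral) (auto simp: Xset_def eps_coord_sroot)
  finally show ?thesis .
qed

lemma theta_invariant_neg_X_root_sum:
  assumes "1 \<le> r" "2 * r < n"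
  shows "theta_invariant n r (wneg (X_root_sum n r))"
proof (rule theta_invariant_if_eps_symmetric)
  show "wneg (X_root_sum n r) \<in> wt_lattice n"
    unfolding X_root_sum_def wt_lattice_def wneg_def sroot_def by auto
  show "\<forall>m\<in>{1..n + 1}. m \<le> r \<or> n - r + 2 \<le> m \<longrightarrow>
      eps_coord n (wneg (X_root_sum n r)) m = eps_coord n (wneg (X_root_sum n r)) (n + 2 - m)"
  proof (intro ballI impI)
    fix m assume "m \<in> {1..n + 1}" "m \<le> r \<or> n - r + 2 \<le> m"
    moreover have "n + 2 - m \<in> {1..n + 1}" "n + 2 - m \<le> r \<or> n - r + 2 \<le> n + 2 - m"
      using calculation assms by auto
    ultimately show "eps_coord n (wneg (X_root_sum n r)) m
        = eps_coord n (wneg (X_root_sum n r)) (n + 2 - m)"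
      using assms(1) by (simp add: eps_coord_wneg eps_coord_X_root_sum)
  qed
qed (use assms in \<open>auto simp: eps_coord_wneg eps_coord_X_root_sum\<close>)

section \<open>Commuting generators of \<open>U\<^sub>q(sl\<^bsub>n+1\<^esub>)\<close>\<close>

lemma tauI_tauI [simp]: "k \<le> n \<Longrightarrow> tauI n (tauI n k) = k"
  unfolding tauI_def by simp

lemma cartan_eq_0: "k + 2 \<le> l \<or> l + 2 \<le> k \<Longrightarrow> cartan k l = 0"
  unfolding cartan_def by auto

lemma sroot_eq_0: "k + 2 \<le> l \<or> l + 2 \<le> k \<Longrightarrow> sroot n k l = 0"
  unfolding sroot_def by (simp add: cartan_eq_0)

locale uq_sl =
  fixes n :: nat and sc :: "'k::field \<Rightarrow> 'a::ring_1" and q :: 'k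
    and E F :: "nat \<Rightarrow> 'a" and K :: "weight \<Rightarrow> 'a"
  assumes scalar: "scalar_alg sc" and relations: "uq_rels n sc q E F K"
begin

lemma K_commute:
  assumes "\<mu> \<in> wt_lattice n" "\<nu> \<in> wt_lattice n"
  shows "K \<mu> * K \<nu> = K \<nu> * K \<mu>"
proof -
  have "wadd \<mu> \<nu> = wadd \<nu> \<mu>" unfolding wadd_def by (simp add: add.commute)
  then show ?thesis using relations assms unfolding uq_rels_def by metis
qed

lemma K_E_commute:
  assumes "\<mu> \<in> wt_lattice n" "k \<in> {1..n}" "\<mu> k = 0"
  shows "K \<mu> * E k = E k * K \<mu>"
proof -
  have "K \<mu> * E k = sc (q powi \<mu> k) * E k * K \<mu>"
    using relations assms(1,2) unfolding uq_rels_def by blast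
  then show ?thesis using assms(3) by (simp add: scalar_one[OF scalar])
qed

lemma K_F_commute:
  assumes "\<mu> \<in> wt_lattice n" "k \<in> {1..n}" "\<mu> k = 0"
  shows "K \<mu> * F k = F k * K \<mu>"
proof -
  have "K \<mu> * F k = sc (q powi (- \<mu> k)) * F k * K \<mu>"
    using relations assms(1,2) unfolding uq_rels_def by blast
  then show ?thesis using assms(3) by (simp add: scalar_one[OF scalar])
qed

lemma E_F_commute:
  assumes "k \<in> {1..n}" "l \<in> {1..n}" "k \<noteq> l"
  shows "E k * F l = F l * E k"
proof -
  have "E k * F l - F l * E k = (if k = l then
      sc (1 / (q - 1 / q)) * (K (sroot n k) - K (wneg (sroot n k))) else 0)"
    using relations assms(1,2) unfolding uq_rels_def by blast
  then show ?thesis using assms(3) by simp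
qed

lemma E_E_commute:
  assumes "k \<in> {1..n}" "l \<in> {1..n}" "k \<noteq> l" "cartan k l = 0"
  shows "E k * E l = E l * E k"
  using relations assms unfolding uq_rels_def by blast

lemma F_F_commute:
  assumes "k \<in> {1..n}" "l \<in> {1..n}" "k \<noteq> l" "cartan k l = 0"
  shows "F k * F l = F l * F k"
  using relations assms unfolding uq_rels_def by blast

definition node_gens :: "nat set \<Rightarrow> nat set \<Rightarrow> 'a set" where
  "node_gens S S' = E ` S \<union> F ` S \<union> K ` {\<mu> \<in> wt_lattice n. \<forall>l\<in>S'. \<mu> l = 0}"

lemma node_gens_commute:
  assumes "S \<subseteq> {1..n}" "S' \<subseteq> {1..n}" and apart: "\<forall>k\<in>S. \<forall>l\<in>S'. k + 2 \<le> l \<or> l + 2 \<le> k"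
    and "x \<in> alg_gen sc (node_gens S S')" "y \<in> alg_gen sc (node_gens S' S)"
  shows "x * y = y * x"
proof (rule alg_gen_commute[OF scalar _ assms(4,5)], intro ballI)
  have nodes: "k \<noteq> l" "l \<noteq> k" "cartan k l = 0" if "k \<in> S" "l \<in> S'" for k l
    using apart that cartan_eq_0 by fastforce+
  have ranges: "k \<in> {1..n}" if "k \<in> S \<union> S'" for k
    using that assms(1,2) by blast
  fix u v assume u: "u \<in> node_gens S S'" and v: "v \<in> node_gens S' S"
  consider (E) k where "k \<in> S" "u = E k" | (F) k where "k \<in> S" "u = F k"
    | (K) \<mu> where "\<mu> \<in> wt_lattice n" "\<forall>l\<in>S'. \<mu> l = 0" "u = K \<mu>"
    using u unfolding node_gens_def by blast
  then show "u * v = v * u"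
  proof cases
    case E
    with v nodes ranges show ?thesis
      unfolding node_gens_def by (auto simp: E_E_commute E_F_commute K_E_commute)
  next
    case F
    with v nodes ranges show ?thesis
      unfolding node_gens_def by (auto simp: F_F_commute E_F_commute K_F_commute)
  next
    case K
    with v nodes ranges show ?thesis
      unfolding node_gens_def by (auto simp: K_commute K_E_commute K_F_commute)
  qed
qed

end

locale coideal_setting = uq_sl n sc "s\<^sup>2" E F K
  for n :: nat and sc :: "'k::field \<Rightarrow> 'a::ring_1" and s :: 'k
    and E F :: "nat \<Rightarrow> 'a" and K :: "weight \<Rightarrow> 'a" +
  fixes c g :: "nat \<Rightarrow> 'k" and B :: "nat \<Rightarrow> 'a" and T tt :: "nat \<Rightarrow> 'a \<Rightarrow> 'a" and r :: nat
  assumes r_pos: "1 \<le> r" and r_bound: "2 * r < n"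
    and lusztig_T: "\<forall>k\<in>{1..n}. lusztig n sc (s\<^sup>2) E F K k (T k)"
    and B_eq: "B = Bgen n r sc (s\<^sup>2) c E F K"
    and tt_i: "\<forall>k\<in>{1..r - 1}. ttau_i_spec n r sc s g E F K T B k (tt k)"
    and tt_r: "ttau_r_spec n r sc s c g E F K T B (tt r)"
begin

abbreviation "\<tau> \<equiv> tauI n"
abbreviation "coideal \<equiv> Bc n r sc E F K B"
abbreviation "block \<equiv> {r..\<tau> r}"

lemma block_in_range: "k \<in> block \<Longrightarrow> k \<in> {1..n}"
  using r_pos unfolding tauI_def by auto

lemma T_hom: "k \<in> {1..n} \<Longrightarrow> alg_hom_on sc UNIV (T k)"
  using lusztig_T unfolding lusztig_def alg_aut_on_def by blast

lemma T_fixes_F: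
  assumes "k \<in> {1..n}" "m \<in> {1..n}" "k + 2 \<le> m \<or> m + 2 \<le> k"
  shows "T k (F m) = F m"
proof -
  have "\<forall>j\<in>{1..n}. j \<noteq> k \<and> cartan k j = 0 \<longrightarrow> T k (E j) = E j \<and> T k (F j) = F j"
    using lusztig_T assms(1) unfolding lusztig_def by blast
  then show ?thesis using assms cartan_eq_0[of k m] by auto
qed

lemma T_fixes_K:
  assumes "k \<in> {1..n}" "\<mu> \<in> wt_lattice n" "\<mu> k = 0"
  shows "T k (K \<mu>) = K \<mu>"
proof -
  have "T k (K \<mu>) = K (srefl n k \<mu>)" using lusztig_T assms(1,2) unfolding lusztig_def by blast
  also have "srefl n k \<mu> = \<mu>" unfolding srefl_def using assms(3) by simp
  finally show ?thesis .
qed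

lemma K_in_U0Theta: "theta_invariant n r \<mu> \<Longrightarrow> K \<mu> \<in> U0Theta n r sc K"
  unfolding U0Theta_def theta_invariant_def by (intro alg_gen.gen) blast

lemma MX_in_MXU0:
  assumes "x \<in> MX n r sc E F K"
  shows "x \<in> MXU0 n r sc E F K"
proof -
  have "1 \<in> U0Theta n r sc K" unfolding U0Theta_def by (rule alg_gen_one[OF scalar])
  then show ?thesis unfolding MXU0_def using assms mult_1_right[of x, symmetric] by blast
qed

lemma U0Theta_in_MXU0:
  assumes "x \<in> U0Theta n r sc K"
  shows "x \<in> MXU0 n r sc E F K"
proof -
  have "1 \<in> MX n r sc E F K" unfolding MX_def by (rule alg_gen_one[OF scalar])
  then show ?thesis unfolding MXU0_def using assms mult_1_left[of x, symmetric] by blast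
qed

lemma U0Theta_in_Bc: "x \<in> U0Theta n r sc K \<Longrightarrow> x \<in> coideal"
  unfolding Bc_def by (rule alg_gen.gen) simp

lemma B_in_Bc: "j \<in> {1..n} - Xset n r \<Longrightarrow> B j \<in> coideal"
  unfolding Bc_def by (rule alg_gen.gen) blast

lemma MX_in_Bc: "x \<in> MX n r sc E F K \<Longrightarrow> x \<in> coideal"
  unfolding Bc_def by (rule alg_gen.gen) simp

lemma F_X_in_MX: "alg_gen sc (F ` Xset n r) \<subseteq> MX n r sc E F K"
  unfolding MX_def by (intro alg_gen_subset) (auto intro: alg_gen.gen)

lemma FX_in_alg_gen_F_X:
  "FXp sc q F n r \<in> alg_gen sc (F ` Xset n r)" "FXm sc q F n r \<in> alg_gen sc (F ` Xset n r)"
  unfolding FXp_def FXm_def using r_bound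
  by (intro alg_gen_foldr_qbr[OF scalar]; auto simp: Xset_def intro: alg_gen.gen)+

context
  fixes p assumes p: "p \<in> {1..r - 1}"
begin

lemma tt_i_props: "ttau_i_spec n r sc s g E F K T B p (tt p)"
  using tt_i p by blast

lemma tt_i_hom: "alg_hom_on sc coideal (tt p)"
  using tt_i_props unfolding ttau_i_spec_def alg_aut_on_def by blast

lemma tt_i_MXU0: "x \<in> MXU0 n r sc E F K \<Longrightarrow> tt p x = T p (T (\<tau> p) x)"
  using tt_i_props unfolding ttau_i_spec_def by blast

lemma tt_i_B_self:
  "j \<in> {1..n} - Xset n r \<Longrightarrow> j \<in> {p, \<tau> p} \<Longrightarrow>
    tt p (B j) = sc (1 / s\<^sup>2) * B (\<tau> j) * Lw K n (\<tau> j)"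
  using tt_i_props unfolding ttau_i_spec_def by blast

lemma tt_i_B_adjacent:
  "j \<in> {1..n} - Xset n r \<Longrightarrow> cartan p j = -1 \<Longrightarrow>
    tt p (B j) = sc (1 / (s * g p)) * qbr sc (s\<^sup>2) (B j) (B p)"
  using tt_i_props unfolding ttau_i_spec_def by blast

lemma tt_i_B_tau_adjacent:
  "j \<in> {1..n} - Xset n r \<Longrightarrow> cartan (\<tau> p) j = -1 \<Longrightarrow>
    tt p (B j) = sc (1 / (s * g (\<tau> p))) * qbr sc (s\<^sup>2) (B j) (B (\<tau> p))"
  using tt_i_props unfolding ttau_i_spec_def by blast

lemma tt_i_B_distant:
  "j \<in> {1..n} - Xset n r \<Longrightarrow> cartan p j = 0 \<Longrightarrow> cartan (\<tau> p) j = 0 \<Longrightarrow> tt p (B j) = B j"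
  using tt_i_props unfolding ttau_i_spec_def by blast

lemma p_nodes: "p \<in> {1..n}" "\<tau> p \<in> {1..n}"
  using p r_bound unfolding tauI_def by auto

lemma tt_i_fixes_K:
  assumes "theta_invariant n r \<mu>" "\<mu> p = 0" "\<mu> (\<tau> p) = 0"
  shows "tt p (K \<mu>) = K \<mu>"
proof -
  have "\<mu> \<in> wt_lattice n" using assms(1) unfolding theta_invariant_def by blast
  then show ?thesis
    using tt_i_MXU0 U0Theta_in_MXU0 K_in_U0Theta assms T_fixes_K p_nodes by simp
qed

lemma tt_i_fixes_F_X:
  assumes "x \<in> alg_gen sc (F ` Xset n r)"
  shows "tt p x = x"
proof -
  have "T k x = x" if "k \<in> {p, \<tau> p}" for k
  proof (rule alg_hom_fixes_alg_gen[OF scalar _ _ _ assms])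
    show "alg_hom_on sc (alg_gen sc UNIV) (T k)" using T_hom p_nodes that by auto
    show "\<forall>y\<in>F ` Xset n r. T k y = y"
      using that p r_bound by (auto simp: Xset_def tauI_def intro!: T_fixes_F)
  qed simp
  moreover have "x \<in> MXU0 n r sc E F K"
    using assms F_X_in_MX MX_in_MXU0 by blast
  ultimately show ?thesis using tt_i_MXU0 by simp
qed

end

lemmas tt_r_props = tt_r[unfolded ttau_r_spec_def Let_def]

lemma tt_r_hom: "alg_hom_on sc coideal (tt r)"
  using tt_r_props unfolding alg_aut_on_def by blast

lemma tt_r_MXU0:
  "x \<in> MXU0 n r sc E F K \<Longrightarrow> tt r x = foldr T ([r..<n - r + 2] @ rev [r..<n - r + 1]) x"
  using tt_r_props by blast

lemma tt_r_B_r: "tt r (B r) = sc (1 / s\<^sup>2) * B r * Lw K n r * Kvp K n (r + 1)"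
  using tt_r_props by blast

lemma tt_r_B_tau_r:
  "tt r (B (\<tau> r)) = sc (1 / s\<^sup>2) * B (\<tau> r) * Lw K n (\<tau> r) * Kvp K n (\<tau> (r + 1))"
  using tt_r_props by blast

lemma tt_r_B_r_minus_1:
  "2 \<le> r \<Longrightarrow> tt r (B (r - 1)) = sc (1 / (s * g r * g (\<tau> r))) *
    (qbr sc (s\<^sup>2) (B (r - 1)) (qbr sc (s\<^sup>2) (B r) (qbr sc (s\<^sup>2) (FXp sc (s\<^sup>2) F n r) (B (\<tau> r))))
     + sc (s\<^sup>2 * c (\<tau> r)) * B (r - 1) * Lw K n r * KXinv K n r)"
  using tt_r_props by blast

lemma tt_r_B_tau_r_minus_1:
  "2 \<le> r \<Longrightarrow> tt r (B (\<tau> (r - 1))) = sc (1 / (s * g r * g (\<tau> r))) *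
    (qbr sc (s\<^sup>2) (B (\<tau> (r - 1))) (qbr sc (s\<^sup>2) (B (\<tau> r)) (qbr sc (s\<^sup>2) (FXm sc (s\<^sup>2) F n r) (B r)))
     + sc (s\<^sup>2 * c r) * B (\<tau> (r - 1)) * Lw K n (\<tau> r) * KXinv K n r)"
  using tt_r_props by blast

lemma tt_r_B_other:
  "j \<in> {1..n} - Xset n r \<Longrightarrow> j \<notin> {r - 1, r, \<tau> r, \<tau> (r - 1)} \<Longrightarrow> tt r (B j) = B j"
  using tt_r_props by blast

lemma tt_r_fixes_K:
  assumes "theta_invariant n r \<mu>" "\<forall>k\<in>block. \<mu> k = 0"
  shows "tt r (K \<mu>) = K \<mu>"
proof -
  have "foldr T ks (K \<mu>) = K \<mu>" if "set ks \<subseteq> block" for ks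
    using that assms block_in_range
    by (induction ks) (auto simp: T_fixes_K theta_invariant_def)
  moreover have "set ([r..<n - r + 2] @ rev [r..<n - r + 1]) \<subseteq> block"
    using r_bound unfolding tauI_def by auto
  ultimately show ?thesis
    using tt_r_MXU0 U0Theta_in_MXU0 K_in_U0Theta assms(1) by simp
qed

section \<open>Far nodes and the block\<close>

definition far :: "nat \<Rightarrow> bool" where
  "far p \<longleftrightarrow> p \<in> {1..n} \<and> (p + 2 \<le> r \<or> \<tau> r + 2 \<le> p)"

lemma far_tau: "far p \<Longrightarrow> far (\<tau> p)"
  unfolding far_def tauI_def by auto

lemma far_apart: "far p \<Longrightarrow> k \<in> block \<Longrightarrow> k + 2 \<le> p \<or> p + 2 \<le> k"
  unfolding far_def by auto

lemma far_generator: "far p \<Longrightarrow> p \<in> {1..n} - Xset n r"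
  using r_bound unfolding far_def Xset_def tauI_def by auto

lemma far_if_small: "i \<in> {1..r - 2} \<Longrightarrow> far i"
  unfolding far_def using r_bound by auto

lemma Lw_in_Bc: "p \<in> {1..n} \<Longrightarrow> Lw K n p \<in> coideal"
  unfolding Lw_def
  using U0Theta_in_Bc K_in_U0Theta theta_invariant_sroot_diff r_pos r_bound by blast

lemma Lw_weight_vanishes: "far p \<Longrightarrow> k \<in> block \<Longrightarrow> wsub (sroot n p) (sroot n (\<tau> p)) k = 0"
  unfolding wsub_def using far_apart far_tau sroot_eq_0 by (metis diff_self)

definition far_gens :: "'a set" where
  "far_gens = B ` Collect far \<union> Lw K n ` Collect far"

lemma far_gens_in_Bc: "far_gens \<subseteq> coideal"
  unfolding far_gens_def using B_in_Bc far_generator Lw_in_Bc by (auto simp: far_def)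

lemma Bc_hom_fixes_alg_gen:
  assumes "alg_hom_on sc coideal f" "G \<subseteq> coideal" "\<forall>y\<in>G. f y = y" "x \<in> alg_gen sc G"
  shows "f x = x"
  using alg_hom_fixes_alg_gen[OF scalar] assms unfolding Bc_def by blast

lemma tt_r_fixes_far_gens: "y \<in> far_gens \<Longrightarrow> tt r y = y"
proof -
  have "tt r (B p) = B p" if "far p" for p
    using that far_generator r_bound by (intro tt_r_B_other) (auto simp: far_def tauI_def)
  moreover have "tt r (Lw K n p) = Lw K n p" if "far p" for p
    unfolding Lw_def using that r_pos r_bound
    by (intro tt_r_fixes_K theta_invariant_sroot_diff ballI Lw_weight_vanishes) (auto simp: far_def)
  ultimately show "y \<in> far_gens \<Longrightarrow> tt r y = y"
    unfolding far_gens_def by blast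
qed

lemma tt_i_B_far:
  assumes i: "i \<in> {1..r - 2}" and j: "far j"
  shows "tt i (B j) \<in> alg_gen sc far_gens"
proof -
  have i': "i \<in> {1..r - 1}" using i by auto
  have gens: "B p \<in> alg_gen sc far_gens" "Lw K n p \<in> alg_gen sc far_gens" if "far p" for p
    using that unfolding far_gens_def by (auto intro: alg_gen.gen)
  have far: "far i" "far (\<tau> i)" "far (\<tau> j)"
    using far_if_small[OF i] far_tau j by auto
  have off_diagonal: "cartan a b = -1 \<or> cartan a b = 0" if "a \<noteq> b" for a b
    using that unfolding cartan_def by auto
  consider (self) "j \<in> {i, \<tau> i}" | (adjacent) "cartan i j = -1"
    | (tau_adjacent) "cartan (\<tau> i) j = -1" | (distant) "cartan i j = 0" "cartan (\<tau> i) j = 0"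
    using off_diagonal[of i j] off_diagonal[of "\<tau> i" j] by (cases "j \<in> {i, \<tau> i}") auto
  then show ?thesis
  proof cases
    case self
    then show ?thesis
      unfolding tt_i_B_self[OF i' far_generator[OF j] self]
      by (intro alg_gen.mult alg_gen_smult[OF scalar] gens far)
  next
    case adjacent
    then show ?thesis
      unfolding tt_i_B_adjacent[OF i' far_generator[OF j] adjacent]
      by (intro alg_gen_qbr[OF scalar] alg_gen_smult[OF scalar] gens far j)
  next
    case tau_adjacent
    then show ?thesis
      unfolding tt_i_B_tau_adjacent[OF i' far_generator[OF j] tau_adjacent]
      by (intro alg_gen_qbr[OF scalar] alg_gen_smult[OF scalar] gens far j)
  next
    case distant
    then show ?thesis
      unfolding tt_i_B_distant[OF i' far_generator[OF j] distant] by (intro gens j)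
  qed
qed

definition block_gens :: "'a set" where
  "block_gens = {B r, B (\<tau> r), FXp sc (s\<^sup>2) F n r, FXm sc (s\<^sup>2) F n r}
     \<union> K ` {\<mu>. theta_invariant n r \<mu> \<and> (\<forall>p. far p \<longrightarrow> \<mu> p = 0)}"

lemma block_gens_members:
  "B r \<in> block_gens" "B (\<tau> r) \<in> block_gens"
  "FXp sc (s\<^sup>2) F n r \<in> block_gens" "FXm sc (s\<^sup>2) F n r \<in> block_gens"
  unfolding block_gens_def by simp_all

lemma block_weights_in_block_gens:
  "Lw K n r \<in> block_gens" "Lw K n (\<tau> r) \<in> block_gens" "KXinv K n r \<in> block_gens"
  "Kvp K n (r + 1) \<in> block_gens" "Kvp K n (\<tau> (r + 1)) \<in> block_gens"
proof -
  have nodes: "r \<in> block" "\<tau> r \<in> block" "r + 1 \<in> block" "\<tau> (r + 1) \<in> block"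
    using r_bound unfolding tauI_def by auto
  have vanish: "sroot n k p = 0" "fund_wt k p = 0" if "far p" "k \<in> block" for k p
    using far_apart[OF that] sroot_eq_0[of k p] unfolding fund_wt_def by auto
  have X_vanish: "X_root_sum n r p = 0" if "far p" for p
    unfolding X_root_sum_def using vanish(1)[OF that] r_bound
    by (intro sum.neutral) (auto simp: Xset_def tauI_def)
  have in_gens: "K \<mu> \<in> block_gens" if "theta_invariant n r \<mu>" "\<And>p. far p \<Longrightarrow> \<mu> p = 0" for \<mu>
    using that unfolding block_gens_def by blast
  have range: "r \<in> {1..n}" "\<tau> r \<in> {1..n}" "r + 1 \<in> {1..n}" "\<tau> (r + 1) \<in> {1..n}"
    using nodes block_in_range by auto
  show "Lw K n r \<in> block_gens" "Lw K n (\<tau> r) \<in> block_gens"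
    unfolding Lw_def using range nodes
    by (intro in_gens theta_invariant_sroot_diff r_pos r_bound; simp add: wsub_def vanish)+
  show "KXinv K n r \<in> block_gens"
    unfolding KXinv_eq
    by (intro in_gens theta_invariant_neg_X_root_sum r_pos r_bound) (simp add: wneg_def X_vanish)
  show "Kvp K n (r + 1) \<in> block_gens" "Kvp K n (\<tau> (r + 1)) \<in> block_gens"
    unfolding Kvp_def using range nodes
    by (intro in_gens theta_invariant_fund_wt_diff r_pos r_bound; simp add: wsub_def vanish)+
qed

lemma block_gens_in_Bc: "block_gens \<subseteq> coideal"
proof -
  have "B r \<in> coideal" "B (\<tau> r) \<in> coideal"
    using r_pos r_bound by (auto intro!: B_in_Bc simp: Xset_def tauI_def)
  moreover have "FXp sc (s\<^sup>2) F n r \<in> coideal" "FXm sc (s\<^sup>2) F n r \<in> coideal"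
    using FX_in_alg_gen_F_X F_X_in_MX MX_in_Bc by blast+
  moreover have "K \<mu> \<in> coideal" if "theta_invariant n r \<mu>" for \<mu>
    using that U0Theta_in_Bc K_in_U0Theta by blast
  ultimately show ?thesis unfolding block_gens_def by blast
qed

lemma tt_i_fixes_block_gens:
  assumes i: "i \<in> {1..r - 2}" and y: "y \<in> block_gens"
  shows "tt i y = y"
proof -
  have i': "i \<in> {1..r - 1}" using i by auto
  have far: "far i" "far (\<tau> i)" using far_if_small[OF i] far_tau by auto
  have "tt i (B k) = B k" if "k \<in> {r, \<tau> r}" for k
    using that i r_bound
    by (intro tt_i_B_distant[OF i'] cartan_eq_0) (auto simp: Xset_def tauI_def)
  moreover have "tt i (FXp sc (s\<^sup>2) F n r) = FXp sc (s\<^sup>2) F n r"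
    "tt i (FXm sc (s\<^sup>2) F n r) = FXm sc (s\<^sup>2) F n r"
    using tt_i_fixes_F_X[OF i' FX_in_alg_gen_F_X(1)] tt_i_fixes_F_X[OF i' FX_in_alg_gen_F_X(2)] .
  moreover have "tt i (K \<mu>) = K \<mu>" if "theta_invariant n r \<mu>" "\<forall>p. far p \<longrightarrow> \<mu> p = 0" for \<mu>
    using that far by (intro tt_i_fixes_K[OF i']) auto
  ultimately show ?thesis
    using y unfolding block_gens_def by blast
qed

lemma block_gens_in_node_gens:
  assumes p: "far p"
  shows "block_gens \<subseteq> alg_gen sc (node_gens block {p, \<tau> p})"
proof -
  let ?A = "alg_gen sc (node_gens block {p, \<tau> p})"
  have E: "E k \<in> ?A" and F: "F k \<in> ?A" if "k \<in> block" for k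
    using that unfolding node_gens_def by (auto intro: alg_gen.gen)
  have K: "K \<mu> \<in> ?A" if "\<mu> \<in> wt_lattice n" "\<mu> p = 0" "\<mu> (\<tau> p) = 0" for \<mu>
    using that unfolding node_gens_def by (auto intro: alg_gen.gen)
  have K_root: "K (wneg (sroot n k)) \<in> ?A" if "k \<in> block" for k
    using far_apart[OF p that] far_apart[OF far_tau[OF p] that]
    by (intro K wt_lattice_closed) (auto simp: wneg_def intro!: sroot_eq_0)
  have X_block: "Xset n r \<subseteq> block"
    unfolding Xset_def tauI_def by auto
  have nodes: "r \<in> block" "\<tau> r \<in> block" "\<tau> r \<noteq> r"
    using r_bound unfolding tauI_def by auto
  have "EXp sc (s\<^sup>2) E n r \<in> ?A" "EXm sc (s\<^sup>2) E n r \<in> ?A"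
    unfolding EXp_def EXm_def using X_block r_bound
    by (intro alg_gen_foldr_qbr[OF scalar]; auto simp: Xset_def intro!: E)+
  then have "B r \<in> ?A" "B (\<tau> r) \<in> ?A"
    unfolding B_eq Bgen_def using nodes
    by (auto intro!: alg_gen_diff[OF scalar] alg_gen.mult alg_gen.scal alg_gen_qbr[OF scalar]
        E F K_root)
  moreover have "FXp sc (s\<^sup>2) F n r \<in> ?A" "FXm sc (s\<^sup>2) F n r \<in> ?A"
    using FX_in_alg_gen_F_X alg_gen_subset[of "F ` Xset n r" sc "node_gens block {p, \<tau> p}"]
      X_block F by blast+
  moreover have "K \<mu> \<in> ?A" if "theta_invariant n r \<mu>" "\<forall>q. far q \<longrightarrow> \<mu> q = 0" for \<mu>
    using that p far_tau unfolding theta_invariant_def by (intro K) auto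
  ultimately show ?thesis unfolding block_gens_def by blast
qed

lemma B_far_in_node_gens:
  assumes p: "far p"
  shows "B p \<in> alg_gen sc (node_gens {p, \<tau> p} block)"
proof -
  have "p \<noteq> r" "p \<noteq> \<tau> r" using p r_bound unfolding far_def tauI_def by auto
  then have "B p = F p - sc (c p) * E (\<tau> p) * K (wneg (sroot n p))"
    unfolding B_eq Bgen_def by simp
  moreover have "wneg (sroot n p) \<in> wt_lattice n" by simp
  moreover have "\<forall>k\<in>block. wneg (sroot n p) k = 0"
    using far_apart[OF p] by (simp add: wneg_def sroot_eq_0 add.commute disj_commute)
  then have "F p \<in> node_gens {p, \<tau> p} block" "E (\<tau> p) \<in> node_gens {p, \<tau> p} block"
    "K (wneg (sroot n p)) \<in> node_gens {p, \<tau> p} block"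
    unfolding node_gens_def by auto
  ultimately show ?thesis
    by (auto intro!: alg_gen_diff[OF scalar] alg_gen.mult alg_gen.scal intro: alg_gen.gen)
qed

lemma block_gens_commute_B_far:
  assumes p: "far p" and x: "x \<in> alg_gen sc block_gens"
  shows "x * B p = B p * x"
proof (rule node_gens_commute)
  show "block \<subseteq> {1..n}" "{p, \<tau> p} \<subseteq> {1..n}"
    using block_in_range p far_tau unfolding far_def by auto
  show "\<forall>k\<in>block. \<forall>l\<in>{p, \<tau> p}. k + 2 \<le> l \<or> l + 2 \<le> k"
    using far_apart p far_tau by blast
  show "x \<in> alg_gen sc (node_gens block {p, \<tau> p})"
    using x alg_gen_subset[OF block_gens_in_node_gens[OF p]] by blast
  show "B p \<in> alg_gen sc (node_gens {p, \<tau> p} block)"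
    by (rule B_far_in_node_gens[OF p])
qed

lemma tt_r_B_near:
  assumes "2 \<le> r" "j \<in> {r - 1, r, \<tau> r, \<tau> (r - 1)}"
  shows "tt r (B j) \<in> alg_gen sc (insert (B j) block_gens)"
proof -
  let ?A = "alg_gen sc (insert (B j) block_gens)"
  have Bj: "B j \<in> ?A" by (auto intro: alg_gen.gen)
  have "y \<in> ?A" if "y \<in> block_gens" for y
    using that by (auto intro: alg_gen.gen)
  then have block: "B r \<in> ?A" "B (\<tau> r) \<in> ?A" "FXp sc (s\<^sup>2) F n r \<in> ?A"
    "FXm sc (s\<^sup>2) F n r \<in> ?A" "Lw K n r \<in> ?A" "Lw K n (\<tau> r) \<in> ?A" "KXinv K n r \<in> ?A"
    "Kvp K n (r + 1) \<in> ?A" "Kvp K n (\<tau> (r + 1)) \<in> ?A"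
    using block_gens_members block_weights_in_block_gens by blast+
  from assms(2) consider "j = r - 1" | "j = r" | "j = \<tau> r" | "j = \<tau> (r - 1)" by blast
  then show ?thesis
  proof cases
    case 1
    show ?thesis
      unfolding 1 tt_r_B_r_minus_1[OF assms(1)]
      by (intro alg_gen_smult[OF scalar] alg_gen.add alg_gen_qbr[OF scalar] alg_gen.mult
          Bj[unfolded 1] block[unfolded 1])
  next
    case 2
    show ?thesis
      unfolding 2 tt_r_B_r by (intro alg_gen.mult alg_gen_smult[OF scalar] block[unfolded 2])
  next
    case 3
    show ?thesis
      unfolding 3 tt_r_B_tau_r by (intro alg_gen.mult alg_gen_smult[OF scalar] block[unfolded 3])
  next
    case 4
    show ?thesis
      unfolding 4 tt_r_B_tau_r_minus_1[OF assms(1)]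
      by (intro alg_gen_smult[OF scalar] alg_gen.add alg_gen_qbr[OF scalar] alg_gen.mult
          Bj[unfolded 4] block[unfolded 4])
  qed
qed

lemma block_alg_in_Bc: "alg_gen sc block_gens \<subseteq> coideal"
  using alg_gen_subset[OF block_gens_in_Bc[unfolded Bc_def]] unfolding Bc_def .

section \<open>Commutation of \<open>\<tau>\<^sub>r\<close> and \<open>\<tau>\<^sub>i\<close>\<close>

lemma tt_commute_linked:
  assumes i: "i \<in> {1..r - 2}" and p: "far p" and A: "A \<in> coideal"
    and Z: "Z \<in> alg_gen sc block_gens" and W: "W \<in> alg_gen sc block_gens"
    and tt_r_A: "tt r A = sc C * (qbr sc (s\<^sup>2) A Z + sc d * (A * W))"
    and tt_i_A: "tt i A = sc a * qbr sc (s\<^sup>2) A (B p)"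
  shows "tt r (tt i A) = tt i (tt r A)"
proof -
  have i': "i \<in> {1..r - 1}" using i by auto
  have members: "B p \<in> coideal" "Z \<in> coideal" "W \<in> coideal"
    using B_in_Bc[OF far_generator[OF p]] Z W block_alg_in_Bc by blast+
  have "tt r (B p) = B p"
    using p tt_r_fixes_far_gens unfolding far_gens_def by blast
  moreover have "tt i Z = Z" "tt i W = W"
    using Bc_hom_fixes_alg_gen[OF tt_i_hom[OF i'] block_gens_in_Bc] tt_i_fixes_block_gens[OF i] Z W
    by blast+
  moreover have "Z * B p = B p * Z" "W * B p = B p * W"
    using block_gens_commute_B_far[OF p] Z W by blast+
  ultimately show ?thesis
    using alg_homs_commute_on_twisted_qbr[OF scalar tt_r_hom[unfolded Bc_def]
        tt_i_hom[OF i', unfolded Bc_def] A[unfolded Bc_def] members[unfolded Bc_def] tt_r_A tt_i_A]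
    by blast
qed

lemma tt_commute_far:
  assumes i: "i \<in> {1..r - 2}" and j: "far j"
  shows "tt r (tt i (B j)) = tt i (tt r (B j))"
proof -
  have "tt r (tt i (B j)) = tt i (B j)"
    using Bc_hom_fixes_alg_gen[OF tt_r_hom far_gens_in_Bc] tt_r_fixes_far_gens tt_i_B_far[OF i j]
    by blast
  moreover have "tt r (B j) = B j"
    using j tt_r_fixes_far_gens unfolding far_gens_def by blast
  ultimately show ?thesis by simp
qed

lemma tt_commute_near:
  assumes i: "i \<in> {1..r - 2}" and j: "j \<in> {r - 1, r, \<tau> r, \<tau> (r - 1)}"
    and distant: "cartan i j = 0" "cartan (\<tau> i) j = 0"
  shows "tt r (tt i (B j)) = tt i (tt r (B j))"
proof -
  have i': "i \<in> {1..r - 1}" and r: "2 \<le> r" using i by auto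
  have j': "j \<in> {1..n} - Xset n r"
    using j r r_bound unfolding Xset_def tauI_def by auto
  have fixed: "tt i (B j) = B j" by (rule tt_i_B_distant[OF i' j' distant])
  have gens: "insert (B j) block_gens \<subseteq> coideal"
    using B_in_Bc[OF j'] block_gens_in_Bc by blast
  have gens_fixed: "\<forall>y\<in>insert (B j) block_gens. tt i y = y"
    using fixed tt_i_fixes_block_gens[OF i] by blast
  have "tt i (tt r (B j)) = tt r (B j)"
    by (rule Bc_hom_fixes_alg_gen[OF tt_i_hom[OF i'] gens gens_fixed tt_r_B_near[OF r j]])
  then show ?thesis by (simp add: fixed)
qed

lemma tt_commute_B_r_minus_1:
  assumes r: "3 \<le> r"
  shows "tt r (tt (r - 2) (B (r - 1))) = tt (r - 2) (tt r (B (r - 1)))"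
proof -
  have i: "r - 2 \<in> {1..r - 2}" and i': "r - 2 \<in> {1..r - 1}" using r by auto
  have j: "r - 1 \<in> {1..n} - Xset n r" using r r_bound unfolding Xset_def by auto
  have "tt r (B (r - 1)) = sc (1 / (s * g r * g (\<tau> r))) *
      (qbr sc (s\<^sup>2) (B (r - 1)) (qbr sc (s\<^sup>2) (B r) (qbr sc (s\<^sup>2) (FXp sc (s\<^sup>2) F n r) (B (\<tau> r))))
       + sc (s\<^sup>2 * c (\<tau> r)) * (B (r - 1) * (Lw K n r * KXinv K n r)))"
    using tt_r_B_r_minus_1 r by (simp add: mult.assoc)
  moreover have "cartan (r - 2) (r - 1) = -1"
    using r unfolding cartan_def by auto
  then have "tt (r - 2) (B (r - 1)) = sc (1 / (s * g (r - 2))) * qbr sc (s\<^sup>2) (B (r - 1)) (B (r - 2))"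
    by (rule tt_i_B_adjacent[OF i' j])
  moreover have "qbr sc (s\<^sup>2) (B r) (qbr sc (s\<^sup>2) (FXp sc (s\<^sup>2) F n r) (B (\<tau> r)))
      \<in> alg_gen sc block_gens" "Lw K n r * KXinv K n r \<in> alg_gen sc block_gens"
    by (intro alg_gen_qbr[OF scalar] alg_gen.mult alg_gen.gen block_gens_members
        block_weights_in_block_gens)+
  ultimately show ?thesis
    using tt_commute_linked[OF i far_if_small[OF i] B_in_Bc[OF j]] by blast
qed

lemma tt_commute_B_tau_r_minus_1:
  assumes r: "3 \<le> r"
  shows "tt r (tt (r - 2) (B (\<tau> (r - 1)))) = tt (r - 2) (tt r (B (\<tau> (r - 1))))"
proof -
  have i: "r - 2 \<in> {1..r - 2}" and i': "r - 2 \<in> {1..r - 1}" using r by auto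
  have j: "\<tau> (r - 1) \<in> {1..n} - Xset n r" using r r_bound unfolding Xset_def tauI_def by auto
  have "tt r (B (\<tau> (r - 1))) = sc (1 / (s * g r * g (\<tau> r))) *
      (qbr sc (s\<^sup>2) (B (\<tau> (r - 1))) (qbr sc (s\<^sup>2) (B (\<tau> r)) (qbr sc (s\<^sup>2) (FXm sc (s\<^sup>2) F n r) (B r)))
       + sc (s\<^sup>2 * c r) * (B (\<tau> (r - 1)) * (Lw K n (\<tau> r) * KXinv K n r)))"
    using tt_r_B_tau_r_minus_1 r by (simp add: mult.assoc)
  moreover have "cartan (\<tau> (r - 2)) (\<tau> (r - 1)) = -1"
    using r r_bound unfolding cartan_def tauI_def by auto
  then have "tt (r - 2) (B (\<tau> (r - 1)))
      = sc (1 / (s * g (\<tau> (r - 2)))) * qbr sc (s\<^sup>2) (B (\<tau> (r - 1))) (B (\<tau> (r - 2)))"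
    by (rule tt_i_B_tau_adjacent[OF i' j])
  moreover have "qbr sc (s\<^sup>2) (B (\<tau> r)) (qbr sc (s\<^sup>2) (FXm sc (s\<^sup>2) F n r) (B r))
      \<in> alg_gen sc block_gens" "Lw K n (\<tau> r) * KXinv K n r \<in> alg_gen sc block_gens"
    by (intro alg_gen_qbr[OF scalar] alg_gen.mult alg_gen.gen block_gens_members
        block_weights_in_block_gens)+
  ultimately show ?thesis
    using tt_commute_linked[OF i far_tau[OF far_if_small[OF i]] B_in_Bc[OF j]] by blast
qed

lemma tt_r_tt_i_commute:
  assumes i: "i \<in> {1..r - 2}" and j: "j \<in> {1..n} - Xset n r"
  shows "tt r (tt i (B j)) = tt i (tt r (B j))"
proof -
  have r: "3 \<le> r" using i by auto
  have "far j \<or> j \<in> {r - 1, \<tau> (r - 1)} \<or> j \<in> {r, \<tau> r}"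
    using j r r_bound unfolding far_def Xset_def tauI_def by auto
  moreover have "cartan i j = 0 \<and> cartan (\<tau> i) j = 0"
    if "j \<in> {r, \<tau> r} \<or> i \<noteq> r - 2 \<and> j \<in> {r - 1, \<tau> (r - 1)}"
    using that i r_bound unfolding tauI_def by (auto intro!: cartan_eq_0)
  ultimately consider (far) "far j"
    | (near) "j \<in> {r - 1, r, \<tau> r, \<tau> (r - 1)}" "cartan i j = 0" "cartan (\<tau> i) j = 0"
    | (linked) "j = r - 1" "i = r - 2" | (tau_linked) "j = \<tau> (r - 1)" "i = r - 2"
    by blast
  then show ?thesis
  proof cases
    case far
    then show ?thesis by (rule tt_commute_far[OF i])
  next
    case near
    then show ?thesis by (rule tt_commute_near[OF i])
  next
    case linked
    then show ?thesis using tt_commute_B_r_minus_1[OF r] by simp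
  next
    case tau_linked
    then show ?thesis using tt_commute_B_tau_r_minus_1[OF r] by simp
  qed
qed

end

theorem proposition5p1:
  fixes Kf :: "'k::field_char_0 set" and s :: 'k and c g :: "nat \<Rightarrow> 'k"
    and sc :: "'k \<Rightarrow> 'a::ring_1" and E F B :: "nat \<Rightarrow> 'a" and K :: "weight \<Rightarrow> 'a"
    and T tt :: "nat \<Rightarrow> 'a \<Rightarrow> 'a" and n r i j :: nat
  assumes "1 \<le> n" and "1 \<le> r" and "r \<le> (n + 1) div 2 - 1"
    and "subfield Kf" and "transcendental_over Kf s"
    and "\<forall>k\<in>{1..n} - Xset n r. c k \<in> adjoin Kf s \<and> c k \<noteq> 0"
    and "\<forall>k\<in>{1..n} - (Xset n r \<union> {r, tauI n r}). c k = c (tauI n k)"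
    and "\<forall>k\<in>{1..n} - Xset n r. g k ^ 2 = c k"
    and "scalar_alg sc"
    and "uq_rels n sc (s^2) E F K"
    and "\<forall>k\<in>{1..n}. lusztig n sc (s^2) E F K k (T k)"
    and "B = Bgen n r sc (s^2) c E F K"
    and "\<forall>k\<in>{1..r - 1}. ttau_i_spec n r sc s g E F K T B k (tt k)"
    and "ttau_r_spec n r sc s c g E F K T B (tt r)"
    and "i \<in> {1..r - 2}" and "j \<in> {1..n} - Xset n r"
  shows "tt r (tt i (B j)) = tt i (tt r (B j))"
proof -
  have "2 * r < n" using assms(2,3) by linarith
  then interpret coideal_setting n sc s E F K c g B T tt r
    using assms(2,9-14) by unfold_locales
  show ?thesis using tt_r_tt_i_commute assms(15,16) .
qed

end
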